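(* Under the standing assumptions, if $g$ is e-convex, then $$v(P)\ \ge\ v(\bar D^F)\ \ge\ v(D^F).$$
   Context: Let $X$ be a nontrivial separated locally convex space with topological dual $X^*$, endowed with the topology $\sigma(X,X^* )$; $\langle x,x^*\rangle$ is the value of $x^*\in X^*$ at $x\in X$. Put $W:=X^*\times X^*\times\mathbb{R}$, $\mathbb{R}_{++}:=]0,+\infty[$ and $Z:=X^*\times X^*\times\mathbb{R}_{++}$. For $y^*\in X^*$, $\alpha\in\mathbb{R}$, let $H^-_{y^*,\alpha}:=\{x\in X:\langle x,y^*\rangle<\alpha\}$. The coupling function $c:X\times W\to\overline{\mathbb{R}}$ is $c(x,(x^*,y^*,\alpha)):=\langle x,x^*\rangle$ if $\langle x,y^*\rangle<\alpha$ and $:=+\infty$ otherwise; $c'((x^*,y^*,\alpha),x):=c(x,(x^*,y^*,\alpha))$. For $h:X\to\overline{\mathbb{R}}$ its $c$-conjugate is $h^c:W\to\overline{\mathbb{R}}$, $h^c(w):=\sup_{x\in X}\{c(x,w)-h(x)\}$; for $k:W\to\overline{\mathbb{R}}$, $k^{c'}(x):=\sup_{w\in W}\{c'(w,x)-k(w)\}$. In these conjugations the convention $(+\infty)+(-\infty)=(-\infty)+(+\infty)=(+\infty)-(+\infty)=(-\infty)-(-\infty)=-\infty$ is used (so for proper $h$, $h^c(x^*,y^*,\alpha)=h^*(x^* )$ if $\operatorname{dom}h\subseteq H^-_{y^*,\alpha}$ and $+\infty$ otherwise, $h^*$ the Fenchel conjugate). $\operatorname{dom}$ and $\operatorname{epi}$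 denote effective domain and epigraph; $\delta_A$ is the indicator function of $A$ ($0$ on $A$, $+\infty$ outside). A set $C\subseteq X$ is e-convex if for every $x_0\notin C$ there is $x^*\in X^*$ with $\langle x-x_0,x^*\rangle<0$ for all $x\in C$; a function is e-convex if its epigraph is e-convex in $X\times\mathbb{R}$. Standing assumptions: $f,g:X\to\overline{\mathbb{R}}$ are proper convex functions with $\operatorname{dom}f\subseteq\operatorname{dom}g$, $A\subseteq X$ is nonempty, and in the objective $f-g$ the convention $(+\infty)-(+\infty)=+\infty$ is used. The primal problem $(P)$ is $\inf_{x\in A}\{f(x)-g(x)\}$, with value $v(P)=\inf_{x\in X}\{f(x)-g(x)+\delta_A(x)\}$. For $(u^*,v^*,\gamma),(x^*,y^*,\alpha)\in W$ set $\varphi(u^*,v^*,\gamma;x^*,y^*,\alpha):=g^c(u^*,v^*,\gamma)-f^c(u^*-x^*,-y^*,\alpha)-\delta_A^c(x^*,y^*,\alpha)$. The dual problems are $(D^F)$: $v(D^F):=\sup_{(x^*,y^*,\alpha)\in Z}\ \inf_{(u^*,v^*,\gamma)\in\operatorname{dom}g^c}\varphi(u^*,v^*,\gamma;x^*,y^*,\alpha)$, and $(\bar D^F)$: $v(\bar D^F):=\inf_{(u^*,v^*,\gamma)\in\operatorname{dom}g^c}\ \sup_{(x^*,y^*,\alpha)\in Z}\varphi(u^*,v^*,\gamma;x^*,y^*,\alpha)$. *)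

theory Defs
  imports "HOL-Analysis.Analysis"
begin

text \<open>Dual pair setting: X is a real vector space (type 'a), and Xs plays the role of X*,
  a point-separating linear subspace of the algebraic dual. Every separated locally convex
  space with its topological dual gives such a pair, and conversely sigma(X,Xs) is a separated
  locally convex topology with dual exactly Xs.\<close>

definition dual_pair :: "('a::real_vector \<Rightarrow> real) set \<Rightarrow> bool" where
  "dual_pair Xs \<longleftrightarrow>
     (\<forall>\<phi>\<in>Xs. linear \<phi>) \<and>
     (\<lambda>x. 0) \<in> Xs \<and>
     (\<forall>\<phi>\<in>Xs. \<forall>\<psi>\<in>Xs. (\<lambda>x. \<phi> x + \<psi> x) \<in> Xs) \<and>
     (\<forall>\<phi>\<in>Xs. \<forall>t::real. (\<lambda>x. t * \<phi> x) \<in> Xs) \<and>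
     (\<forall>x. x \<noteq> 0 \<longrightarrow> (\<exists>\<phi>\<in>Xs. \<phi> x \<noteq> 0))"

definition ladd :: "ereal \<Rightarrow> ereal \<Rightarrow> ereal" where
  "ladd a b = (if (a = \<infinity> \<and> b = -\<infinity>) \<or> (a = -\<infinity> \<and> b = \<infinity>) then -\<infinity> else a + b)"

definition lminus :: "ereal \<Rightarrow> ereal \<Rightarrow> ereal" where
  "lminus a b = ladd a (- b)"

definition epi :: "('a \<Rightarrow> ereal) \<Rightarrow> ('a \<times> real) set" where
  "epi h = {(x, r). h x \<le> ereal r}"

definition edom :: "('a \<Rightarrow> ereal) \<Rightarrow> 'a set" where
  "edom h = {x. h x < \<infinity>}"

definition proper_fun :: "('a \<Rightarrow> ereal) \<Rightarrow> bool" where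
  "proper_fun h \<longleftrightarrow> (\<forall>x. h x \<noteq> -\<infinity>) \<and> (\<exists>x. h x < \<infinity>)"

definition convex_fun :: "('a::real_vector \<Rightarrow> ereal) \<Rightarrow> bool" where
  "convex_fun h \<longleftrightarrow> convex (epi h)"

definition indicator_ereal :: "'a set \<Rightarrow> 'a \<Rightarrow> ereal" where
  "indicator_ereal A x = (if x \<in> A then 0 else \<infinity>)"

text \<open>e-convexity in X x R; the dual of X x R is X* x R.\<close>
definition e_convex_fun :: "('a::real_vector \<Rightarrow> real) set \<Rightarrow> ('a \<Rightarrow> ereal) \<Rightarrow> bool" where
  "e_convex_fun Xs h \<longleftrightarrow>
     (\<forall>x0 r0. (x0, r0) \<notin> epi h \<longrightarrow>
        (\<exists>xs\<in>Xs. \<exists>s::real. \<forall>(x, r)\<in>epi h. xs (x - x0) + s * (r - r0) < 0))"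

type_synonym 'a W = "('a \<Rightarrow> real) \<times> ('a \<Rightarrow> real) \<times> real"

definition Wset :: "('a \<Rightarrow> real) set \<Rightarrow> 'a W set" where
  "Wset Xs = Xs \<times> Xs \<times> UNIV"

definition Zset :: "('a \<Rightarrow> real) set \<Rightarrow> 'a W set" where
  "Zset Xs = Xs \<times> Xs \<times> {0<..}"

definition coupling :: "'a \<Rightarrow> 'a W \<Rightarrow> ereal" where
  "coupling x w = (case w of (xs, ys, \<alpha>) \<Rightarrow>
      if ys x < \<alpha> then ereal (xs x) else \<infinity>)"

definition c_conj :: "('a \<Rightarrow> real) set \<Rightarrow> ('a \<Rightarrow> ereal) \<Rightarrow> 'a W \<Rightarrow> ereal" where
  "c_conj Xs h w = (SUP x\<in>UNIV. lminus (coupling x w) (h x))"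

definition dom_W :: "('a \<Rightarrow> real) set \<Rightarrow> ('a W \<Rightarrow> ereal) \<Rightarrow> 'a W set" where
  "dom_W Xs k = {w \<in> Wset Xs. k w < \<infinity>}"

definition phi_F ::
  "('a \<Rightarrow> real) set \<Rightarrow> ('a \<Rightarrow> ereal) \<Rightarrow> ('a \<Rightarrow> ereal) \<Rightarrow> 'a set \<Rightarrow> 'a W \<Rightarrow> 'a W \<Rightarrow> ereal" where
  "phi_F Xs f g A u z = (case u of (us, vs, \<gamma>) \<Rightarrow> case z of (xs, ys, \<alpha>) \<Rightarrow>
      lminus (lminus (c_conj Xs g (us, vs, \<gamma>))
                     (c_conj Xs f (\<lambda>x. us x - xs x, \<lambda>x. - ys x, \<alpha>)))
             (c_conj Xs (indicator_ereal A) (xs, ys, \<alpha>)))"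

definition vP :: "('a \<Rightarrow> ereal) \<Rightarrow> ('a \<Rightarrow> ereal) \<Rightarrow> 'a set \<Rightarrow> ereal" where
  "vP f g A = (INF x\<in>UNIV. f x - g x + indicator_ereal A x)"

definition vDF :: "('a \<Rightarrow> real) set \<Rightarrow> ('a \<Rightarrow> ereal) \<Rightarrow> ('a \<Rightarrow> ereal) \<Rightarrow> 'a set \<Rightarrow> ereal" where
  "vDF Xs f g A = (SUP z\<in>Zset Xs. INF u\<in>dom_W Xs (c_conj Xs g). phi_F Xs f g A u z)"

definition vDF_bar :: "('a \<Rightarrow> real) set \<Rightarrow> ('a \<Rightarrow> ereal) \<Rightarrow> ('a \<Rightarrow> ereal) \<Rightarrow> 'a set \<Rightarrow> ereal" where
  "vDF_bar Xs f g A = (INF u\<in>dom_W Xs (c_conj Xs g). SUP z\<in>Zset Xs. phi_F Xs f g A u z)"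

end

theory Submission
  imports Defs
begin

text \<open>The inequality between the two dual values is the general max-min inequality. For the
  other one, fix a feasible x and \<open>\<epsilon> > 0\<close>. Separating \<open>(x, g x - \<epsilon>)\<close> from the epigraph
  of the e-convex function g gives a non-vertical hyperplane, i.e. some \<open>u\<^sup>* \<in> X\<^sup>*\<close> with
  \<open>u\<^sup>* y - g y < u\<^sup>* x - g x + \<epsilon>\<close> for all y. Hence \<open>(u\<^sup>*, 0, 1) \<in> dom g\<^sup>c\<close> with
  \<open>g\<^sup>c(u\<^sup>*, 0, 1) \<le> u\<^sup>* x - g x + \<epsilon>\<close>, while evaluating the conjugates of f and \<open>\<delta>\<^sub>A\<close> at x
  bounds \<open>\<phi>(u\<^sup>*, 0, 1; z)\<close> by \<open>g\<^sup>c(u\<^sup>*, 0, 1) - u\<^sup>* x + f x \<le> f x - g x + \<epsilon>\<close> for every z.\<close>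

lemma ladd_mono:
  fixes a b a' b' :: ereal
  assumes "a \<le> a'" "b \<le> b'"
  shows "ladd a b \<le> ladd a' b'"
proof (cases "(a' = \<infinity> \<and> b' = -\<infinity>) \<or> (a' = -\<infinity> \<and> b' = \<infinity>)")
  case True
  then have "a = -\<infinity> \<or> b = -\<infinity>" using assms by auto
  then have "ladd a b = -\<infinity>" by (cases a; cases b; auto simp: ladd_def)
  then show ?thesis by simp
next
  case False
  then have "ladd a' b' = a' + b'" by (simp add: ladd_def)
  moreover have "ladd a b \<le> a + b" by (auto simp: ladd_def)
  ultimately show ?thesis using add_mono[OF assms] by simp
qed

lemma lminus_mono:
  fixes a b a' b' :: ereal
  assumes "a \<le> a'" "b' \<le> b"
  shows "lminus a b \<le> lminus a' b'"
  unfolding lminus_def using assms by (intro ladd_mono) auto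

lemma lminus_infinity_right [simp]: "lminus a \<infinity> = -\<infinity>"
  by (cases a) (auto simp: lminus_def ladd_def)

lemma lminus_minus_infinity_left [simp]: "lminus (-\<infinity>) b = -\<infinity>"
  by (cases b) (auto simp: lminus_def ladd_def)

lemma lminus_ereal [simp]: "lminus (ereal a) (ereal b) = ereal (a - b)"
  by (simp add: lminus_def ladd_def)

lemma lminus_lminus_ereal: "lminus (lminus a (ereal b)) (ereal c) = lminus a (ereal (b + c))"
  by (cases a) (auto simp: lminus_def ladd_def)

lemma SUP_INF_le_INF_SUP:
  fixes \<phi> :: "'u \<Rightarrow> 'z \<Rightarrow> 'b::complete_lattice"
  shows "(SUP z\<in>Z. INF u\<in>U. \<phi> u z) \<le> (INF u\<in>U. SUP z\<in>Z. \<phi> u z)"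
  by (rule SUP_least, rule INF_greatest) (meson INF_lower SUP_upper order_trans)

lemma c_conj_upper: "lminus (coupling x w) (h x) \<le> c_conj Xs h w"
  unfolding c_conj_def by (rule SUP_upper) simp

lemma phi_F_le_at_feasible_point:
  assumes "x \<in> A" and "f x = ereal fx"
  shows "phi_F Xs f g A (us, vs, \<gamma>) z \<le> lminus (c_conj Xs g (us, vs, \<gamma>)) (ereal (us x - fx))"
proof -
  obtain zx zy \<alpha> where z: "z = (zx, zy, \<alpha>)" by (cases z) auto
  define G where "G = c_conj Xs g (us, vs, \<gamma>)"
  define F where "F = c_conj Xs f (\<lambda>y. us y - zx y, \<lambda>y. - zy y, \<alpha>)"
  define D where "D = c_conj Xs (indicator_ereal A) (zx, zy, \<alpha>)"
  have phi: "phi_F Xs f g A (us, vs, \<gamma>) z = lminus (lminus G F) D"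
    by (simp add: phi_F_def z G_def F_def D_def)
  have F_ge: "lminus (coupling x (\<lambda>y. us y - zx y, \<lambda>y. - zy y, \<alpha>)) (f x) \<le> F"
    and D_ge: "lminus (coupling x (zx, zy, \<alpha>)) (indicator_ereal A x) \<le> D"
    unfolding F_def D_def by (rule c_conj_upper)+
  consider "\<not> - zy x < \<alpha>" | "\<not> zy x < \<alpha>" | "- zy x < \<alpha>" "zy x < \<alpha>" by blast
  then show ?thesis
  proof cases
    case 1
    then have "F = \<infinity>" using F_ge by (simp add: coupling_def assms lminus_def ladd_def)
    then show ?thesis by (simp add: phi)
  next
    case 2
    then have "D = \<infinity>"
      using D_ge by (simp add: coupling_def assms indicator_ereal_def lminus_def ladd_def)
    then show ?thesis by (simp add: phi)
  next
    case 3
    then have "ereal (us x - zx x - fx) \<le> F" and "ereal (zx x) \<le> D"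
      using F_ge D_ge by (simp_all add: coupling_def assms indicator_ereal_def zero_ereal_def)
    then have "lminus (lminus G F) D \<le> lminus (lminus G (ereal (us x - zx x - fx))) (ereal (zx x))"
      by (intro lminus_mono) auto
    then show ?thesis by (simp add: phi lminus_lminus_ereal G_def)
  qed
qed

text \<open>The separating functional has a negative \<open>\<real>\<close>-component s because the separated point
  lies directly below \<open>(x, g x)\<close>; dividing by \<open>-s\<close> yields the minorant.\<close>

lemma e_convex_approximate_subgradient:
  assumes "dual_pair Xs" and "e_convex_fun Xs g"
    and "g x = ereal gx" and "0 < \<epsilon>"
  obtains us where "us \<in> Xs" "\<And>y gy. g y = ereal gy \<Longrightarrow> us y - gy < us x - gx + \<epsilon>"
proof -
  define r0 where "r0 = gx - \<epsilon>"
  have "(x, r0) \<notin> epi g" using assms(4) by (simp add: epi_def assms(3) r0_def)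
  then obtain xs s where xs: "xs \<in> Xs"
    and sep: "\<And>y r. (y, r) \<in> epi g \<Longrightarrow> xs (y - x) + s * (r - r0) < 0"
    using assms(2) unfolding e_convex_fun_def by blast
  have lin: "linear xs" using assms(1) xs by (auto simp: dual_pair_def)
  have "(x, gx) \<in> epi g" by (simp add: epi_def assms(3))
  from sep[OF this] have "s * \<epsilon> < 0" by (simp add: linear_0[OF lin] r0_def)
  with assms(4) have s: "s < 0" by (simp add: mult_less_0_iff)
  show ?thesis
  proof
    show "(\<lambda>y. (-1/s) * xs y) \<in> Xs" using assms(1) xs unfolding dual_pair_def by blast
  next
    fix y gy assume "g y = ereal gy"
    then have "(y, gy) \<in> epi g" by (simp add: epi_def)
    from sep[OF this] have "xs y - xs x + s * (gy - r0) < 0" by (simp add: linear_diff[OF lin])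
    with s have "(xs y - xs x) / (-s) < gy - r0" by (simp add: field_simps)
    moreover have "(-1/s) * xs y - (-1/s) * xs x = (xs y - xs x) / (-s)"
      by (simp add: diff_divide_distrib)
    ultimately show "(-1/s) * xs y - gy < (-1/s) * xs x - gx + \<epsilon>"
      by (simp add: r0_def)
  qed
qed

lemma c_conj_le_of_affine_minorant:
  assumes "\<And>y. g y \<noteq> -\<infinity>" and "\<And>y gy. g y = ereal gy \<Longrightarrow> us y - gy \<le> c"
  shows "c_conj Xs g (us, \<lambda>y. 0, 1) \<le> ereal c"
  unfolding c_conj_def
proof (rule SUP_least)
  fix y
  show "lminus (coupling y (us, \<lambda>y. 0, 1)) (g y) \<le> ereal c"
    using assms by (cases "g y") (auto simp: coupling_def)
qed

lemma vDF_bar_le_vP: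
  assumes "dual_pair Xs" and "proper_fun f" and "proper_fun g" and "edom f \<subseteq> edom g"
    and "e_convex_fun Xs g"
  shows "vDF_bar Xs f g A \<le> vP f g A"
  unfolding vP_def
proof (rule INF_greatest)
  fix x
  have f_fin: "f x \<noteq> -\<infinity>" and g_fin: "\<And>y. g y \<noteq> -\<infinity>"
    using assms(2,3) by (auto simp: proper_fun_def)
  have g_x: "f x < \<infinity> \<Longrightarrow> g x < \<infinity>" using assms(4) by (auto simp: edom_def)
  show "vDF_bar Xs f g A \<le> f x - g x + indicator_ereal A x"
  proof (cases "x \<in> A \<and> f x < \<infinity>")
    case False
    have "f x - g x \<noteq> -\<infinity>" using f_fin g_fin[of x] g_x by (cases "f x"; cases "g x") auto
    with False have infinite: "f x - g x + indicator_ereal A x = \<infinity>"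
      by (cases "f x - g x") (auto simp: indicator_ereal_def)
    show ?thesis unfolding infinite by simp
  next
    case True
    then have xA: "x \<in> A" by blast
    obtain fx gx where fx: "f x = ereal fx" and gx: "g x = ereal gx"
      using True f_fin g_fin[of x] g_x by (cases "f x"; cases "g x") auto
    show ?thesis
    proof (rule ereal_le_epsilon2)
      fix \<epsilon> :: real assume "0 < \<epsilon>"
      with assms(1,5) gx obtain us where us: "us \<in> Xs"
        and minorant: "\<And>y gy. g y = ereal gy \<Longrightarrow> us y - gy < us x - gx + \<epsilon>"
        by (metis e_convex_approximate_subgradient)
      define u where "u = (us, \<lambda>y::'a. 0::real, 1::real)"
      have G_le: "c_conj Xs g u \<le> ereal (us x - gx + \<epsilon>)"
        unfolding u_def using g_fin minorant by (intro c_conj_le_of_affine_minorant less_imp_le)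
      have "u \<in> dom_W Xs (c_conj Xs g)"
        using us assms(1) G_le by (auto simp: dom_W_def Wset_def dual_pair_def u_def)
      then have "vDF_bar Xs f g A \<le> (SUP z\<in>Zset Xs. phi_F Xs f g A u z)"
        unfolding vDF_bar_def by (rule INF_lower)
      also have "\<dots> \<le> lminus (c_conj Xs g u) (ereal (us x - fx))"
        unfolding u_def by (rule SUP_least, rule phi_F_le_at_feasible_point[where f = f, OF xA fx])
      also have "\<dots> \<le> lminus (ereal (us x - gx + \<epsilon>)) (ereal (us x - fx))"
        using G_le by (rule lminus_mono) simp
      finally show "vDF_bar Xs f g A \<le> f x - g x + indicator_ereal A x + ereal \<epsilon>"
        by (simp add: fx gx xA indicator_ereal_def add.commute add.left_commute)
    qed
  qed
qed

theorem mainTheorem1: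
  fixes Xs :: "('a::real_vector \<Rightarrow> real) set"
    and f g :: "'a \<Rightarrow> ereal" and A :: "'a set"
  assumes "dual_pair Xs"
    and "\<exists>x::'a. x \<noteq> 0"
    and "proper_fun f" and "convex_fun f"
    and "proper_fun g" and "convex_fun g"
    and "edom f \<subseteq> edom g"
    and "A \<noteq> {}"
    and "e_convex_fun Xs g"
  shows "vP f g A \<ge> vDF_bar Xs f g A \<and> vDF_bar Xs f g A \<ge> vDF Xs f g A"
proof
  show "vDF_bar Xs f g A \<le> vP f g A"
    using assms(1,3,5,7,9) by (rule vDF_bar_le_vP)
  show "vDF Xs f g A \<le> vDF_bar Xs f g A"
    unfolding vDF_def vDF_bar_def by (rule SUP_INF_le_INF_SUP)
qed

end
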